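(* Let $K$ be a field of characteristic $p>0$ with $[K:K^p]<\infty$, and let $D$ be a derivation of $K$ of order $p^n$. Then the field extension $K/K^D$ has degree $p^n$, there exists $t\in K$ with $D(t)=1$, and $\mathrm{Im}(D^i)=\ker(D^{p^n-i})$ for every $i=1,\dots,p^n$.
   Context: $K^D=\{x\in K\mid D(x)=0\}$, a subfield of $K$ over which $D$ is linear. A derivation $D$ of $K$ has order $r$ if it is nilpotent of index $r$, i.e. $D^r=0$ and $D^{r-1}\neq0$. *)

theory Defs
  imports "HOL-Algebra.Algebra"
begin

definition ring_char_is :: "('a, 'b) ring_scheme \<Rightarrow> nat \<Rightarrow> bool" where
  "ring_char_is R p \<longleftrightarrow> p > 0 \<and> ([p] \<cdot>\<^bsub>R\<^esub> \<one>\<^bsub>R\<^esub>) = \<zero>\<^bsub>R\<^esub> \<and>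
     (\<forall>m. 0 < m \<and> m < p \<longrightarrow> ([m] \<cdot>\<^bsub>R\<^esub> \<one>\<^bsub>R\<^esub>) \<noteq> \<zero>\<^bsub>R\<^esub>)"

definition derivation :: "('a, 'b) ring_scheme \<Rightarrow> ('a \<Rightarrow> 'a) \<Rightarrow> bool" where
  "derivation R D \<longleftrightarrow>
     (\<forall>x\<in>carrier R. D x \<in> carrier R) \<and>
     (\<forall>x\<in>carrier R. \<forall>y\<in>carrier R. D (x \<oplus>\<^bsub>R\<^esub> y) = D x \<oplus>\<^bsub>R\<^esub> D y) \<and>
     (\<forall>x\<in>carrier R. \<forall>y\<in>carrier R. D (x \<otimes>\<^bsub>R\<^esub> y) = (x \<otimes>\<^bsub>R\<^esub> D y) \<oplus>\<^bsub>R\<^esub> (D x \<otimes>\<^bsub>R\<^esub> y))"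

definition derivation_order :: "('a, 'b) ring_scheme \<Rightarrow> ('a \<Rightarrow> 'a) \<Rightarrow> nat \<Rightarrow> bool" where
  "derivation_order R D r \<longleftrightarrow>
     (\<forall>x\<in>carrier R. (D ^^ r) x = \<zero>\<^bsub>R\<^esub>) \<and> (\<exists>x\<in>carrier R. (D ^^ (r - 1)) x \<noteq> \<zero>\<^bsub>R\<^esub>)"

definition pth_powers :: "('a, 'b) ring_scheme \<Rightarrow> nat \<Rightarrow> 'a set" where
  "pth_powers R p = (\<lambda>x. x [^]\<^bsub>R\<^esub> p) ` carrier R"

definition constants :: "('a, 'b) ring_scheme \<Rightarrow> ('a \<Rightarrow> 'a) \<Rightarrow> 'a set" where
  "constants R D = {x \<in> carrier R. D x = \<zero>\<^bsub>R\<^esub>}"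

end

theory Submission
  imports Defs
begin

text \<open>
  Let \<open>N = p^n\<close> and pick \<open>x\<close> with \<open>D^(N-1) x \<noteq> 0\<close>; then \<open>D^(N-1) x\<close> is a nonzero
  constant. If \<open>D^(k+1) y = 0\<close>, then \<open>D^k y\<close> is a constant too, so for
  \<open>c = D^k y / D^(N-1) x\<close> the element \<open>y - c D^(N-k-1) x\<close> lies in \<open>ker D^k\<close>. Induction on
  \<open>k\<close> shows that \<open>D^(N-k) x, \<dots>, D^(N-1) x\<close> is a basis of \<open>ker D^k\<close> over \<open>K^D\<close> and that
  \<open>ker D^k = Im D^(N-k)\<close>. For \<open>k = N\<close> this gives \<open>[K : K^D] = N\<close>, and as \<open>N \<ge> 2\<close>,
  \<open>1 \<in> ker D = Im D^(N-1) \<subseteq> Im D\<close>.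
\<close>

lemma (in ring) ring_char_is_ge_two:
  assumes "\<one> \<noteq> \<zero>" and "ring_char_is R p"
  shows "p \<ge> 2"
proof -
  have "p \<noteq> 1" using assms unfolding ring_char_is_def by auto
  with assms(2) show ?thesis unfolding ring_char_is_def by simp
qed

locale field_derivation = field R for R (structure) +
  fixes D :: "'a \<Rightarrow> 'a"
  assumes derivation: "derivation R D"
begin

lemma derivation_closed: "x \<in> carrier R \<Longrightarrow> D x \<in> carrier R"
  using derivation unfolding derivation_def by blast

lemma derivation_add: "x \<in> carrier R \<Longrightarrow> y \<in> carrier R \<Longrightarrow> D (x \<oplus> y) = D x \<oplus> D y"
  using derivation unfolding derivation_def by blast

lemma derivation_mult:
  "x \<in> carrier R \<Longrightarrow> y \<in> carrier R \<Longrightarrow> D (x \<otimes> y) = (x \<otimes> D y) \<oplus> (D x \<otimes> y)"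
  using derivation unfolding derivation_def by blast

lemma derivation_zero: "D \<zero> = \<zero>"
proof -
  have "D \<zero> \<oplus> D \<zero> = D \<zero> \<oplus> \<zero>"
    using derivation_add[of \<zero> \<zero>] derivation_closed[of \<zero>] by simp
  then show ?thesis using derivation_closed[of \<zero>] by (simp add: add.l_cancel)
qed

lemma derivation_one: "D \<one> = \<zero>"
proof -
  have "D \<one> \<oplus> D \<one> = D \<one> \<oplus> \<zero>"
    using derivation_mult[of \<one> \<one>] derivation_closed[of \<one>] by simp
  then show ?thesis using derivation_closed[of \<one>] by (simp add: add.l_cancel)
qed

lemma derivation_minus: "x \<in> carrier R \<Longrightarrow> D (\<ominus> x) = \<ominus> D x"
  using derivation_add[of "\<ominus> x" x] derivation_closed[of x] derivation_closed[of "\<ominus> x"]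
  by (simp add: l_neg derivation_zero add.inv_equality)

lemma derivation_diff: "x \<in> carrier R \<Longrightarrow> y \<in> carrier R \<Longrightarrow> D (x \<ominus> y) = D x \<ominus> D y"
  by (simp add: a_minus_def derivation_add derivation_minus)

lemma mem_constants_iff [simp]: "c \<in> constants R D \<longleftrightarrow> c \<in> carrier R \<and> D c = \<zero>"
  unfolding constants_def by simp

lemma derivation_constant_mult:
  "c \<in> constants R D \<Longrightarrow> y \<in> carrier R \<Longrightarrow> D (c \<otimes> y) = c \<otimes> D y"
  using derivation_mult derivation_closed by simp

lemma constants_m_closed:
  "a \<in> constants R D \<Longrightarrow> b \<in> constants R D \<Longrightarrow> a \<otimes> b \<in> constants R D"
  using derivation_constant_mult by simp

lemma constants_inv_closed:
  assumes "c \<in> constants R D" and "c \<noteq> \<zero>"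
  shows "inv c \<in> constants R D"
proof -
  have c: "c \<in> carrier R" "D c = \<zero>" "c \<in> Units R" using assms field_Units by auto
  have "c \<otimes> D (inv c) = D (c \<otimes> inv c)"
    using derivation_constant_mult[OF assms(1), of "inv c"] c by simp
  also have "\<dots> = \<zero>" using c derivation_one by simp
  finally show ?thesis
    using c assms(2) derivation_closed[of "inv c"] integral by auto
qed

lemma iter_closed: "x \<in> carrier R \<Longrightarrow> (D ^^ k) x \<in> carrier R"
  by (induction k) (auto simp: derivation_closed)

lemma iter_zero: "(D ^^ k) \<zero> = \<zero>"
  by (induction k) (auto simp: derivation_zero)

lemma iter_add:
  "x \<in> carrier R \<Longrightarrow> y \<in> carrier R \<Longrightarrow> (D ^^ k) (x \<oplus> y) = (D ^^ k) x \<oplus> (D ^^ k) y"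
  by (induction k) (auto simp: derivation_add iter_closed)

lemma iter_diff:
  "x \<in> carrier R \<Longrightarrow> y \<in> carrier R \<Longrightarrow> (D ^^ k) (x \<ominus> y) = (D ^^ k) x \<ominus> (D ^^ k) y"
  by (induction k) (auto simp: derivation_diff iter_closed)

lemma iter_iter: "(D ^^ k) ((D ^^ j) y) = (D ^^ (k + j)) y"
  by (simp add: funpow_add)

lemma iter_constant_mult:
  "c \<in> constants R D \<Longrightarrow> y \<in> carrier R \<Longrightarrow> (D ^^ k) (c \<otimes> y) = c \<otimes> (D ^^ k) y"
  by (induction k) (auto simp: derivation_constant_mult iter_closed)

end

text \<open>\<open>x\<close> is a cyclic vector: its iterates \<open>D^i x\<close>, \<open>i < N\<close>, turn out to be a basis of
  \<open>K\<close> over \<open>K^D\<close>.\<close>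

locale cyclic_derivation = field_derivation +
  fixes N :: nat and x :: 'a
  assumes nilpotent: "y \<in> carrier R \<Longrightarrow> (D ^^ N) y = \<zero>"
    and cyclic_closed: "x \<in> carrier R"
    and cyclic_vector: "(D ^^ (N - 1)) x \<noteq> \<zero>"
begin

lemma index_pos: "N > 0"
  using nilpotent[OF cyclic_closed] cyclic_vector by (cases N) auto

lemma last_iterate_constant: "(D ^^ (N - 1)) x \<in> constants R D"
  using nilpotent[OF cyclic_closed] index_pos iter_closed[OF cyclic_closed]
  by (metis Suc_diff_1 comp_apply funpow.simps(2) mem_constants_iff)

lemma iter_constant_mult_iterate:
  "c \<in> constants R D \<Longrightarrow> (D ^^ k) (c \<otimes> (D ^^ j) x) = c \<otimes> (D ^^ (k + j)) x"
  using iter_constant_mult iter_closed[OF cyclic_closed] by (simp add: funpow_add)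

lemma kernel_Suc_decompose:
  assumes "Suc k \<le> N" and "y \<in> {y \<in> carrier R. (D ^^ Suc k) y = \<zero>}"
  obtains c y' where "c \<in> constants R D" "y' \<in> carrier R" "(D ^^ k) y' = \<zero>"
    and "y = c \<otimes> (D ^^ (N - Suc k)) x \<oplus> y'"
proof -
  have y: "y \<in> carrier R" "(D ^^ Suc k) y = \<zero>" using assms(2) by blast+
  let ?b = "(D ^^ (N - 1)) x" and ?v = "(D ^^ (N - Suc k)) x"
  have b: "?b \<in> constants R D" "?b \<in> Units R"
    using last_iterate_constant cyclic_vector field_Units by auto
  have "(D ^^ k) y \<in> constants R D"
    using y iter_closed by simp
  then have c: "(D ^^ k) y \<otimes> inv ?b \<in> constants R D" (is "?c \<in> _")
    using b constants_m_closed constants_inv_closed cyclic_vector by blast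
  have v: "?v \<in> carrier R" using iter_closed cyclic_closed by simp
  have "(D ^^ k) (?c \<otimes> ?v) = ?c \<otimes> ?b"
    using iter_constant_mult_iterate[OF c] assms(1) by (simp add: Suc_diff_Suc)
  also have "\<dots> = (D ^^ k) y"
    using b iter_closed[OF y(1)] by (simp add: m_assoc)
  finally have "(D ^^ k) (y \<ominus> ?c \<otimes> ?v) = \<zero>"
    using iter_diff[of y "?c \<otimes> ?v" k] y(1) c v iter_closed by (simp add: a_minus_def r_neg)
  moreover have "y = ?c \<otimes> ?v \<oplus> (y \<ominus> ?c \<otimes> ?v)"
    using y(1) c v by (simp add: a_minus_def add.m_lcomm r_neg)
  moreover have "y \<ominus> ?c \<otimes> ?v \<in> carrier R" using y(1) c v by simp
  ultimately show ?thesis using that[OF c] by blast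
qed

lemma Span_iterates_eq_kernel:
  "k \<le> N \<Longrightarrow>
   Span (constants R D) (map (\<lambda>i. (D ^^ i) x) [N - k..<N]) = {y \<in> carrier R. (D ^^ k) y = \<zero>}"
proof (induction k)
  case 0
  then show ?case by auto
next
  case (Suc k)
  let ?v = "(D ^^ (N - Suc k)) x"
  have v: "?v \<in> carrier R" using iter_closed cyclic_closed by simp
  have Span_Cons: "Span (constants R D) (map (\<lambda>i. (D ^^ i) x) [N - Suc k..<N])
      = line_extension (constants R D) ?v {y \<in> carrier R. (D ^^ k) y = \<zero>}"
    using Suc by (simp add: upt_conv_Cons Suc_diff_Suc)
  show ?case
  proof (intro equalityI subsetI)
    fix y assume "y \<in> Span (constants R D) (map (\<lambda>i. (D ^^ i) x) [N - Suc k..<N])"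
    then obtain c y' where c: "c \<in> constants R D" and y': "y' \<in> carrier R" "(D ^^ k) y' = \<zero>"
      and y: "y = c \<otimes> ?v \<oplus> y'"
      unfolding Span_Cons line_extension_mem_iff by blast
    have "(D ^^ Suc k) (c \<otimes> ?v) = c \<otimes> (D ^^ N) x"
      using iter_constant_mult_iterate[OF c, of "Suc k"] Suc.prems by (simp del: funpow.simps)
    also have "\<dots> = \<zero>" using nilpotent cyclic_closed c by simp
    moreover have "(D ^^ Suc k) y' = \<zero>" using y' derivation_zero by simp
    ultimately show "y \<in> {y \<in> carrier R. (D ^^ Suc k) y = \<zero>}"
      using y y' c v iter_add[of "c \<otimes> ?v" y' "Suc k"] by (simp del: funpow.simps)
  next
    fix y assume "y \<in> {y \<in> carrier R. (D ^^ Suc k) y = \<zero>}"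
    then obtain c y' where "c \<in> constants R D" "y' \<in> carrier R" "(D ^^ k) y' = \<zero>"
      and "y = c \<otimes> ?v \<oplus> y'"
      by (rule kernel_Suc_decompose[OF Suc.prems])
    then show "y \<in> Span (constants R D) (map (\<lambda>i. (D ^^ i) x) [N - Suc k..<N])"
      unfolding Span_Cons line_extension_mem_iff by blast
  qed
qed

lemma independent_iterates:
  "k \<le> N \<Longrightarrow> independent (constants R D) (map (\<lambda>i. (D ^^ i) x) [N - k..<N])"
proof (induction k)
  case 0
  then show ?case by simp
next
  case (Suc k)
  let ?v = "(D ^^ (N - Suc k)) x"
  have "k + (N - Suc k) = N - 1" using Suc.prems by simp
  then have "(D ^^ k) ?v = (D ^^ (N - 1)) x" by (simp only: iter_iter)
  then have "?v \<notin> Span (constants R D) (map (\<lambda>i. (D ^^ i) x) [N - k..<N])"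
    using Span_iterates_eq_kernel[of k] Suc.prems cyclic_vector by simp
  with Suc show ?case
    using iter_closed[OF cyclic_closed]
    by (simp add: upt_conv_Cons Suc_diff_Suc li_Cons)
qed

lemma kernel_subset_image:
  "k \<le> N \<Longrightarrow> {y \<in> carrier R. (D ^^ k) y = \<zero>} \<subseteq> (D ^^ (N - k)) ` carrier R"
proof (induction k)
  case 0
  show ?case using iter_zero by (auto intro!: image_eqI[where x = \<zero>])
next
  case (Suc k)
  let ?j = "N - Suc k"
  show ?case
  proof
    fix y assume "y \<in> {y \<in> carrier R. (D ^^ Suc k) y = \<zero>}"
    then obtain c y' where c: "c \<in> constants R D" and y': "y' \<in> carrier R" "(D ^^ k) y' = \<zero>"
      and y: "y = c \<otimes> (D ^^ ?j) x \<oplus> y'"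
      by (rule kernel_Suc_decompose[OF Suc.prems])
    have "y' \<in> (D ^^ (N - k)) ` carrier R" using Suc y' by auto
    then obtain z where z: "z \<in> carrier R" "y' = (D ^^ (N - k)) z" by blast
    have "N - k = ?j + 1" using Suc.prems by simp
    then have "y' = (D ^^ ?j) (D z)" using z by (simp only: iter_iter[symmetric]) simp
    then have "y = (D ^^ ?j) (c \<otimes> x \<oplus> D z)"
      using y z c cyclic_closed derivation_closed by (simp add: iter_add iter_constant_mult)
    then show "y \<in> (D ^^ ?j) ` carrier R"
      using c cyclic_closed z derivation_closed by auto
  qed
qed

theorem dimension_constants: "dimension N (constants R D) (carrier R)"
proof -
  have "dimension N (constants R D) (Span (constants R D) (map (\<lambda>i. (D ^^ i) x) [0..<N]))"
    using dimension_independent[OF independent_iterates[of N]] by (simp del: Span.simps)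
  moreover have "{y \<in> carrier R. (D ^^ N) y = \<zero>} = carrier R" using nilpotent by auto
  ultimately show ?thesis using Span_iterates_eq_kernel[of N] by (simp del: Span.simps)
qed

theorem image_iter_eq_kernel:
  "i \<le> N \<Longrightarrow> (D ^^ i) ` carrier R = {y \<in> carrier R. (D ^^ (N - i)) y = \<zero>}"
proof (intro equalityI subsetI)
  fix y assume "i \<le> N" and "y \<in> (D ^^ i) ` carrier R"
  then show "y \<in> {y \<in> carrier R. (D ^^ (N - i)) y = \<zero>}"
    using nilpotent iter_closed by (auto simp: iter_iter)
qed (use kernel_subset_image[of "N - i"] in auto)

theorem exists_antiderivative_one:
  assumes "N \<ge> 2"
  shows "\<exists>t\<in>carrier R. D t = \<one>"
proof -
  have "\<one> \<in> (D ^^ (N - 1)) ` carrier R"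
    using image_iter_eq_kernel[of "N - 1"] assms derivation_one by simp
  then obtain z where z: "z \<in> carrier R" "(D ^^ (N - 1)) z = \<one>" by force
  have "N - 1 = Suc (N - 2)" using assms by simp
  then have "(D ^^ (N - 1)) z = D ((D ^^ (N - 2)) z)" by simp
  then show ?thesis using z iter_closed by metis
qed

end

theorem lemma4p3:
  fixes R :: "('a, 'b) ring_scheme" and D :: "'a \<Rightarrow> 'a" and p n :: nat
  assumes "field R"
    and "ring_char_is R p"
    and "ring.finite_dimension R (pth_powers R p) (carrier R)"
    and "derivation R D"
    and "n \<ge> 1"
    and "derivation_order R D (p ^ n)"
  shows "ring.dimension R (p ^ n) (constants R D) (carrier R)
     \<and> (\<exists>t\<in>carrier R. D t = \<one>\<^bsub>R\<^esub>)
     \<and> (\<forall>i\<in>{1..p ^ n}. (D ^^ i) ` carrier R = {x \<in> carrier R. (D ^^ (p ^ n - i)) x = \<zero>\<^bsub>R\<^esub>})"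
proof -
  obtain x where "x \<in> carrier R" "(D ^^ (p ^ n - 1)) x \<noteq> \<zero>\<^bsub>R\<^esub>"
    using assms(6) unfolding derivation_order_def by blast
  then interpret cyclic_derivation R D "p ^ n" x
    using assms(1,4,6) unfolding derivation_order_def
    by (intro cyclic_derivation.intro field_derivation.intro
        cyclic_derivation_axioms.intro field_derivation_axioms.intro) auto
  have "p ^ 1 \<le> p ^ n"
    using ring_char_is_ge_two[OF one_not_zero assms(2)] assms(5) by (intro power_increasing) auto
  then have "p ^ n \<ge> 2" using ring_char_is_ge_two[OF one_not_zero assms(2)] by simp
  then show ?thesis
    using dimension_constants exists_antiderivative_one image_iter_eq_kernel by auto
qed

end
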